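(* Assume $\lfloor (M_1+\dots+M_n)/p\rfloor=n-1$ (ample reduction). For every $x=(x_1,\dots,x_n)\in\mathbb{F}_p^n$ with pairwise distinct coordinates and every $w\in\{c\in\mathbb{F}_p^n:\ \sum_im_ic_i=0\}$ there exists a unique $(c_1,\dots,c_{n-1})\in\mathbb{F}_p^{n-1}$ with $w=\sum_{l=1}^{n-1}c_lI^{[l]}(x)$.
   Context: $p,q$ are primes, $n$ a positive integer with $p>n\ge2$, $p>q$; $m_1,\dots,m_n$ are positive integers $<q$; $M_i$ is the least positive integer with $M_i\equiv -m_iq^{-1}\pmod p$. With $\Phi_p(x,z)=\prod_i(x-z_i)^{M_i}$ (here in an auxiliary variable, say $t$: $\Phi_p(t,z)=\prod_i(t-z_i)^{M_i}$), $I^{[l]}(z)\in\mathbb{F}_p[z_1,\dots,z_n]^n$ is the coefficient of $t^{lp-1}$ in $(\Phi_p/(t-z_1),\dots,\Phi_p/(t-z_n))$, and $I^{[l]}(x)$ denotes its value at $z=x$. *)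

theory Defs
  imports "Berlekamp_Zassenhaus.Finite_Field" "HOL-Computational_Algebra.Polynomial"
    "HOL-Library.FuncSet"
begin

definition bigM :: "'p::prime_card itself \<Rightarrow> nat \<Rightarrow> nat \<Rightarrow> nat" where
  "bigM _ q mi = (LEAST M::nat. 0 < M \<and>
      (of_nat M :: 'p mod_ring) = - of_nat mi * inverse (of_nat q))"

definition Phi :: "nat \<Rightarrow> (nat \<Rightarrow> nat) \<Rightarrow> (nat \<Rightarrow> 'p::prime_card mod_ring) \<Rightarrow> 'p mod_ring poly" where
  "Phi n M x = (\<Prod>i\<in>{1..n}. [:- x i, 1:] ^ M i)"

definition Ivec :: "nat \<Rightarrow> (nat \<Rightarrow> nat) \<Rightarrow> nat \<Rightarrow> (nat \<Rightarrow> 'p::prime_card mod_ring) \<Rightarrow> nat \<Rightarrow> 'p mod_ring" where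
  "Ivec n M l x i = coeff (Phi n M x div [:- x i, 1:]) (l * CARD('p) - 1)"

end

theory Submission
  imports Defs
begin

(*
  Write Q_i = Phi / (t - x_i), so that I^[l]_i is the coefficient of t^(lp-1) in Q_i and
  Phi' = sum_i M_i Q_i.  Coefficients of index lp - 1 of a derivative vanish in characteristic p,
  so every I^[l] lies in the hyperplane sum_i M_i c_i = 0, which is sum_i m_i c_i = 0 because
  M_i = -m_i/q in F_p.  It remains to see that the n x (n-1) matrix (I^[l]_i) has rank n - 1,
  i.e. that its left kernel is spanned by (M_i).  If G = sum_i d_i Q_i has vanishing coefficients
  at lp - 1 for l < n, then, since deg Phi < np by ampleness, G = F' for some F of degree
  <= deg Phi.  Subtracting K^p, where K interpolates F at the x_i, makes F vanish at every x_i;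
  as (t - x_i)^(M_i - 1) divides F' and M_i < p, this forces Phi | F, so F = c Phi by degree,
  G = c Phi' and d = c M.
*)

lemma exists_antiderivative:
  fixes G :: "'a::field poly"
  assumes "\<And>k. of_nat (Suc k) = (0::'a) \<Longrightarrow> coeff G k = 0"
  shows "\<exists>F. pderiv F = G \<and> degree F \<le> Suc (degree G)"
proof -
  define F where "F = (\<Sum>k\<le>degree G. monom (coeff G k / of_nat (Suc k)) (Suc k))"
  have pderiv_sum: "pderiv (sum f A) = (\<Sum>a\<in>A. pderiv (f a))" for f :: "nat \<Rightarrow> 'a poly" and A
    using higher_pderiv_sum[of 1] by simp
  have "of_nat (Suc k) * (coeff G k / of_nat (Suc k)) = coeff G k" for k
    using assms[of k] by (cases "of_nat (Suc k) = (0::'a)") auto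
  then have "pderiv F = (\<Sum>k\<le>degree G. monom (coeff G k) k)"
    by (simp add: F_def pderiv_sum pderiv_monom del: of_nat_Suc)
  then have "pderiv F = G" by (simp only: poly_as_sum_of_monoms)
  moreover have "degree F \<le> Suc (degree G)"
    unfolding F_def by (intro degree_sum_le) (auto intro: order.trans[OF degree_monom_le])
  ultimately show ?thesis by blast
qed

lemma linear_power_Suc_dvd_if_dvd_pderiv:
  fixes F :: "'a::field poly"
  assumes nonzero: "\<And>k. 0 < k \<Longrightarrow> k \<le> a \<Longrightarrow> of_nat k \<noteq> (0::'a)"
    and root: "poly F x = 0" and dvd_pderiv: "[:-x,1:] ^ a dvd pderiv F"
  shows "[:-x,1:] ^ Suc a dvd F"
proof -
  let ?L = "[:-x,1:] :: 'a poly"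
  have "?L ^ k dvd F" if "k \<le> Suc a" for k
    using that
  proof (induction k)
    case 0
    then show ?case by simp
  next
    case (Suc k)
    then have "?L ^ k dvd F" by simp
    then obtain H where F: "F = ?L ^ k * H" by (elim dvdE)
    show ?case
    proof (cases k)
      case 0
      then show ?thesis using root by (simp add: poly_eq_0_iff_dvd)
    next
      case (Suc k')
      have "?L ^ k dvd pderiv F"
        using Suc.prems dvd_pderiv by (meson Suc_le_mono dvd_trans le_imp_power_dvd)
      moreover have "pderiv (?L ^ k) = smult (of_nat k) (?L ^ k')"
        unfolding Suc pderiv_power_Suc by (simp add: pderiv_pCons)
      then have "pderiv F = ?L ^ k * pderiv H + ?L ^ k' * smult (of_nat k) H"
        unfolding F pderiv_mult by (simp add: mult.commute)
      ultimately have "?L ^ k' * ?L dvd ?L ^ k' * smult (of_nat k) H"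
        by (simp add: Suc mult.commute dvd_add_right_iff)
      moreover have "?L ^ k' \<noteq> 0" by simp
      ultimately have "?L dvd smult (of_nat k) H" using dvd_times_left_cancel_iff by blast
      moreover have "of_nat k \<noteq> (0::'a)" using Suc Suc.prems by (intro nonzero) auto
      ultimately have "?L dvd H" by (rule dvd_smult_cancel)
      then show ?thesis unfolding F power_Suc2 by (intro mult_dvd_mono dvd_refl)
    qed
  qed
  then show ?thesis by blast
qed

lemma coprime_linear_poly:
  fixes a b :: "'a::field"
  assumes "a \<noteq> b"
  shows "coprime [:-a,1:] [:-b,1:]"
proof (rule coprimeI)
  fix d assume "d dvd [:-a,1:]" "d dvd [:-b,1:]"
  then have "d dvd [:-a,1:] - [:-b,1:]" by (rule dvd_diff)
  then have "d dvd [:b - a:]" by simp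
  moreover have "is_unit [:b - a:]" using assms by (simp add: is_unit_const_poly_iff)
  ultimately show "is_unit d" using dvd_unit_imp_unit by blast
qed

lemma prod_dvd_if_pairwise_coprime:
  fixes f :: "'i \<Rightarrow> 'a::semiring_gcd"
  assumes "finite S" and "\<And>j. j \<in> S \<Longrightarrow> f j dvd F"
    and "\<And>i j. i \<in> S \<Longrightarrow> j \<in> S \<Longrightarrow> i \<noteq> j \<Longrightarrow> coprime (f i) (f j)"
  shows "prod f S dvd F"
  using assms
proof (induction S rule: finite_induct)
  case (insert a S)
  have "coprime (f a) (prod f S)"
    using insert by (intro prod_coprime_right) (metis insert_iff)
  then show ?case using insert by (simp add: divides_mult)
qed simp

lemma dvd_degree_le_imp_smult:
  fixes F P :: "'a::field poly"
  assumes "P dvd F" and "degree F \<le> degree P" and "P \<noteq> 0"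
  shows "\<exists>c. F = smult c P"
proof -
  obtain Z where Z: "F = P * Z" using assms(1) by (elim dvdE)
  show ?thesis
  proof (cases "Z = 0")
    case True
    then show ?thesis using Z by simp
  next
    case False
    then have "degree Z = 0" using assms(2,3) Z degree_mult_eq[of P Z] by simp
    then have "F = P * [:coeff Z 0:]" using Z degree_0_id by metis
    then show ?thesis by auto
  qed
qed

lemma finite_square_linear_inj_imp_surj:
  fixes A :: "'i \<Rightarrow> 'i \<Rightarrow> 'a::{finite,comm_ring_1}"
  assumes "finite I"
    and injective: "\<And>d. \<forall>l\<in>I. (\<Sum>i\<in>I. d i * A i l) = 0 \<Longrightarrow> \<forall>i\<in>I. d i = 0"
  shows "\<exists>d. \<forall>l\<in>I. (\<Sum>i\<in>I. d i * A i l) = y l"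
proof -
  define f where "f d = restrict (\<lambda>l. \<Sum>i\<in>I. d i * A i l) I" for d
  let ?V = "PiE I (\<lambda>_. UNIV :: 'a set)"
  have "finite ?V" using \<open>finite I\<close> by (simp add: finite_PiE)
  moreover have "f ` ?V \<subseteq> ?V" by (auto simp: f_def)
  moreover have "inj_on f ?V"
  proof (rule inj_onI)
    fix d d' assume d: "d \<in> ?V" and d': "d' \<in> ?V" and eq: "f d = f d'"
    have "(\<Sum>i\<in>I. d i * A i l) = (\<Sum>i\<in>I. d' i * A i l)" if "l \<in> I" for l
      using fun_cong[OF eq, of l] that by (simp add: f_def)
    then have "\<forall>l\<in>I. (\<Sum>i\<in>I. (d i - d' i) * A i l) = 0"
      by (simp add: left_diff_distrib sum_subtractf)
    then have "\<forall>i\<in>I. d i = d' i" using injective by fastforce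
    then show "d = d'" using d d' by (auto intro: PiE_ext)
  qed
  ultimately have "f ` ?V = ?V" by (rule endo_inj_surj)
  moreover have "restrict y I \<in> ?V" by simp
  ultimately obtain d where fd: "f d = restrict y I" by (metis imageE)
  have "(\<Sum>i\<in>I. d i * A i l) = y l" if "l \<in> I" for l
    using fun_cong[OF fd, of l] that by (simp add: f_def)
  then show ?thesis by blast
qed

lemma finite_square_linear_inj_transpose:
  fixes A :: "'i \<Rightarrow> 'i \<Rightarrow> 'a::{finite,comm_ring_1}"
  assumes "finite I"
    and "\<And>d. \<forall>l\<in>I. (\<Sum>i\<in>I. d i * A i l) = 0 \<Longrightarrow> \<forall>i\<in>I. d i = 0"
    and c: "\<forall>i\<in>I. (\<Sum>l\<in>I. c l * A i l) = 0"
  shows "\<forall>l\<in>I. c l = 0"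
proof
  fix l0 assume l0: "l0 \<in> I"
  have "\<exists>d. \<forall>l\<in>I. (\<Sum>i\<in>I. d i * A i l) = (if l = l0 then 1 else 0)"
    using finite_square_linear_inj_imp_surj[of I A "\<lambda>l. if l = l0 then 1 else 0", OF assms(1,2)] .
  then obtain d where d: "\<forall>l\<in>I. (\<Sum>i\<in>I. d i * A i l) = (if l = l0 then 1 else 0)" ..
  have "c l0 = (\<Sum>l\<in>I. if l = l0 then c l else 0)" using l0 \<open>finite I\<close> by simp
  also have "\<dots> = (\<Sum>l\<in>I. c l * (\<Sum>i\<in>I. d i * A i l))" using d by (intro sum.cong) auto
  also have "\<dots> = (\<Sum>i\<in>I. d i * (\<Sum>l\<in>I. c l * A i l))"
    unfolding sum_distrib_left by (subst sum.swap) (simp add: mult_ac)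
  also have "\<dots> = 0" using c by simp
  finally show "c l0 = 0" .
qed

lemma hyperplane_eq_if_eq_except_last:
  fixes \<mu> u u' :: "nat \<Rightarrow> 'a::field"
  assumes "0 < n" and "\<mu> n \<noteq> 0"
    and u: "(\<Sum>i\<in>{1..n}. \<mu> i * u i) = 0" and u': "(\<Sum>i\<in>{1..n}. \<mu> i * u' i) = 0"
    and init: "\<forall>i\<in>{1..n-1}. u i = u' i"
  shows "\<forall>i\<in>{1..n}. u i = u' i"
proof -
  have split_last: "{1..n} = insert n {1..n-1}" "n \<notin> {1..n-1}" using \<open>0 < n\<close> by auto
  have "(\<Sum>i\<in>{1..n-1}. \<mu> i * u i) = (\<Sum>i\<in>{1..n-1}. \<mu> i * u' i)" using init by simp
  moreover have "\<mu> n * u n + (\<Sum>i\<in>{1..n-1}. \<mu> i * u i) = 0"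
    and "\<mu> n * u' n + (\<Sum>i\<in>{1..n-1}. \<mu> i * u' i) = 0"
    using u u' split_last by simp_all
  ultimately have "\<mu> n * u n = \<mu> n * u' n" by (metis add_right_cancel)
  then have "u n = u' n" using \<open>\<mu> n \<noteq> 0\<close> by simp
  then show ?thesis using init split_last(1) by simp
qed

lemma unique_coordinates_in_hyperplane:
  fixes A :: "nat \<Rightarrow> nat \<Rightarrow> 'a::{finite,field}" and \<mu> w :: "nat \<Rightarrow> 'a"
  assumes "0 < n" and "\<mu> n \<noteq> 0"
    and columns: "\<And>l. l \<in> {1..n-1} \<Longrightarrow> (\<Sum>i\<in>{1..n}. \<mu> i * A i l) = 0"
    and rows_indep: "\<And>d. \<forall>l\<in>{1..n-1}. (\<Sum>i\<in>{1..n-1}. d i * A i l) = 0 \<Longrightarrow> \<forall>i\<in>{1..n-1}. d i = 0"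
    and w: "(\<Sum>i\<in>{1..n}. \<mu> i * w i) = 0"
  shows "\<exists>!c. c \<in> extensional {1..n-1} \<and> (\<forall>i\<in>{1..n}. w i = (\<Sum>l\<in>{1..n-1}. c l * A i l))"
proof -
  let ?I = "{1..n-1}"
  define v where "v c i = (\<Sum>l\<in>?I. c l * A i l)" for c i
  have cols_indep: "\<forall>l\<in>?I. c l = 0" if "\<forall>i\<in>?I. v c i = 0" for c
    using finite_square_linear_inj_transpose[OF _ rows_indep] that unfolding v_def by blast
  have v_in_hyperplane: "(\<Sum>i\<in>{1..n}. \<mu> i * v c i) = 0" for c
  proof -
    have "(\<Sum>i\<in>{1..n}. \<mu> i * v c i) = (\<Sum>l\<in>?I. c l * (\<Sum>i\<in>{1..n}. \<mu> i * A i l))"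
      unfolding v_def sum_distrib_left by (subst sum.swap) (simp add: mult_ac)
    also have "\<dots> = 0" using columns by simp
    finally show ?thesis .
  qed
  have "\<exists>c. \<forall>i\<in>?I. v c i = w i"
    unfolding v_def by (rule finite_square_linear_inj_imp_surj) (use cols_indep in \<open>simp_all add: v_def\<close>)
  then obtain c where c: "\<forall>i\<in>?I. v c i = w i" ..
  have "v (restrict c ?I) = v c" by (simp add: v_def fun_eq_iff)
  then have "\<forall>i\<in>?I. w i = v (restrict c ?I) i" using c by simp
  then have represents: "\<forall>i\<in>{1..n}. w i = v (restrict c ?I) i"
    by (rule hyperplane_eq_if_eq_except_last[OF \<open>0 < n\<close> \<open>\<mu> n \<noteq> 0\<close> w v_in_hyperplane])
  have unique: "c' = restrict c ?I" if "c' \<in> extensional ?I" "\<forall>i\<in>{1..n}. w i = v c' i" for c'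
  proof -
    have "v c' i = v (restrict c ?I) i" if "i \<in> ?I" for i
    proof -
      have "i \<in> {1..n}" using that by auto
      then have "w i = v c' i" "w i = v (restrict c ?I) i"
        using \<open>\<forall>i\<in>{1..n}. w i = v c' i\<close> represents by blast+
      then show ?thesis by simp
    qed
    then have "\<forall>i\<in>?I. v (\<lambda>l. c' l - restrict c ?I l) i = 0"
      by (simp add: v_def left_diff_distrib sum_subtractf)
    then have "\<forall>l\<in>?I. c' l = restrict c ?I l" using cols_indep[of "\<lambda>l. c' l - restrict c ?I l"] by simp
    then show ?thesis by (intro extensionalityI[OF that(1) restrict_extensional]) blast
  qed
  show ?thesis
  proof (rule ex1I[of _ "restrict c ?I"])
    show "restrict c ?I \<in> extensional ?I \<and> (\<forall>i\<in>{1..n}. w i = (\<Sum>l\<in>?I. restrict c ?I l * A i l))"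
      using represents unfolding v_def by simp
  next
    fix c' assume "c' \<in> extensional ?I \<and> (\<forall>i\<in>{1..n}. w i = (\<Sum>l\<in>?I. c' l * A i l))"
    then show "c' = restrict c ?I" using unique unfolding v_def by blast
  qed
qed

lemma of_nat_mod_ring_neq_0:
  assumes "0 < k" and "k < CARD('p)"
  shows "(of_nat k :: 'p::prime_card mod_ring) \<noteq> 0"
  using assms by (auto simp: of_nat_eq_0_iff_char_dvd dest: dvd_imp_le)

lemma bigM_spec:
  assumes "0 < mi" and "mi < q" and "q < CARD('p::prime_card)"
  shows "0 < bigM TYPE('p) q mi" and "bigM TYPE('p) q mi < CARD('p)"
    and "(of_nat (bigM TYPE('p) q mi) :: 'p mod_ring) = - of_nat mi * inverse (of_nat q)"
proof -
  define v :: "'p mod_ring" where "v = - of_nat mi * inverse (of_nat q)"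
  have "(of_nat mi :: 'p mod_ring) \<noteq> 0" and "(of_nat q :: 'p mod_ring) \<noteq> 0"
    using assms by (intro of_nat_mod_ring_neq_0; simp)+
  then have "v \<noteq> 0" unfolding v_def by simp
  obtain i where i: "i < CARD('p)" "v = of_nat i" using surj_of_nat_mod_ring[of v] by blast
  with \<open>v \<noteq> 0\<close> have "0 < i" by (cases i) auto
  let ?P = "\<lambda>M::nat. 0 < M \<and> (of_nat M :: 'p mod_ring) = v"
  have "?P i" using i \<open>0 < i\<close> by simp
  then have "?P (LEAST M. ?P M)" "(LEAST M. ?P M) \<le> i" by (rule LeastI, rule Least_le)
  then show "0 < bigM TYPE('p) q mi" "bigM TYPE('p) q mi < CARD('p)"
    "(of_nat (bigM TYPE('p) q mi) :: 'p mod_ring) = - of_nat mi * inverse (of_nat q)"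
    unfolding bigM_def v_def[symmetric] using i by simp_all
qed

locale ample_nodes =
  fixes n :: nat and M :: "nat \<Rightarrow> nat" and x :: "nat \<Rightarrow> 'p::prime_card mod_ring"
  assumes n_pos: "0 < n"
    and inj_x: "inj_on x {1..n}"
    and M_pos: "\<And>i. i \<in> {1..n} \<Longrightarrow> 0 < M i"
    and M_less_card: "\<And>i. i \<in> {1..n} \<Longrightarrow> M i < CARD('p)"
    and ample: "(\<Sum>i\<in>{1..n}. M i) div CARD('p) = n - 1"
begin

abbreviation D :: nat where "D \<equiv> \<Sum>i\<in>{1..n}. M i"

definition cofactor :: "nat \<Rightarrow> 'p mod_ring poly" where
  "cofactor i = (\<Prod>j\<in>{1..n}-{i}. [:-x j, 1:])"

definition common_factor :: "'p mod_ring poly" where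
  "common_factor = (\<Prod>j\<in>{1..n}. [:-x j, 1:] ^ (M j - 1))"

lemma common_factor_mult_cofactor:
  assumes i: "i \<in> {1..n}"
  shows "common_factor * cofactor i = [:-x i, 1:] ^ (M i - 1) * (\<Prod>j\<in>{1..n}-{i}. [:-x j, 1:] ^ M j)"
proof -
  let ?S = "{1..n}-{i}"
  have "common_factor = [:-x i, 1:] ^ (M i - 1) * (\<Prod>j\<in>?S. [:-x j, 1:] ^ (M j - 1))"
    unfolding common_factor_def using i by (simp add: prod.remove)
  moreover have "(\<Prod>j\<in>?S. [:-x j, 1:] ^ (M j - 1)) * cofactor i = (\<Prod>j\<in>?S. [:-x j, 1:] ^ M j)"
    unfolding cofactor_def prod.distrib[symmetric]
  proof (rule prod.cong)
    fix j assume "j \<in> ?S"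
    then have "M j = Suc (M j - 1)" using M_pos by force
    then show "[:-x j, 1:] ^ (M j - 1) * [:-x j, 1:] = [:-x j, 1:] ^ M j"
      by (metis power_Suc2)
  qed simp
  ultimately show ?thesis by (simp add: mult.assoc)
qed

lemma Phi_eq_linear_mult:
  assumes i: "i \<in> {1..n}"
  shows "Phi n M x = [:-x i, 1:] * (common_factor * cofactor i)"
proof -
  have "Phi n M x = [:-x i, 1:] ^ M i * (\<Prod>j\<in>{1..n}-{i}. [:-x j, 1:] ^ M j)"
    unfolding Phi_def using i by (simp add: prod.remove)
  also have "\<dots> = [:-x i, 1:] * ([:-x i, 1:] ^ (M i - 1) * (\<Prod>j\<in>{1..n}-{i}. [:-x j, 1:] ^ M j))"
    unfolding mult.assoc[symmetric] power_Suc[symmetric] using M_pos[OF i] by simp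
  finally show ?thesis unfolding common_factor_mult_cofactor[OF i] .
qed

lemma Ivec_eq_coeff:
  assumes "i \<in> {1..n}"
  shows "Ivec n M l x i = coeff (common_factor * cofactor i) (l * CARD('p) - 1)"
proof -
  have L: "[:-x i, 1:] \<noteq> 0" by simp
  show ?thesis unfolding Ivec_def Phi_eq_linear_mult[OF assms] nonzero_mult_div_cancel_left[OF L] ..
qed

lemma pderiv_Phi:
  "pderiv (Phi n M x) = common_factor * (\<Sum>i\<in>{1..n}. smult (of_nat (M i)) (cofactor i))"
proof -
  have "pderiv (Phi n M x) =
      (\<Sum>i\<in>{1..n}. (\<Prod>j\<in>{1..n}-{i}. [:-x j, 1:] ^ M j) * pderiv ([:-x i, 1:] ^ M i))"
    unfolding Phi_def by (rule pderiv_prod)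
  also have "\<dots> = (\<Sum>i\<in>{1..n}. common_factor * smult (of_nat (M i)) (cofactor i))"
  proof (rule sum.cong)
    fix i assume i: "i \<in> {1..n}"
    have "pderiv ([:-x i, 1:] ^ M i) = smult (of_nat (M i)) ([:-x i, 1:] ^ (M i - 1))"
      by (simp add: pderiv_power pderiv_pCons)
    then have "(\<Prod>j\<in>{1..n}-{i}. [:-x j, 1:] ^ M j) * pderiv ([:-x i, 1:] ^ M i) =
        smult (of_nat (M i)) ([:-x i, 1:] ^ (M i - 1) * (\<Prod>j\<in>{1..n}-{i}. [:-x j, 1:] ^ M j))"
      by (simp add: mult.commute)
    also have "\<dots> = common_factor * smult (of_nat (M i)) (cofactor i)"
      by (simp add: common_factor_mult_cofactor[OF i])
    finally show "(\<Prod>j\<in>{1..n}-{i}. [:-x j, 1:] ^ M j) * pderiv ([:-x i, 1:] ^ M i) =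
        common_factor * smult (of_nat (M i)) (cofactor i)" .
  qed simp
  finally show ?thesis by (simp add: sum_distrib_left)
qed

lemma sum_M_Ivec_eq_0:
  assumes "0 < l"
  shows "(\<Sum>i\<in>{1..n}. of_nat (M i) * Ivec n M l x i) = 0"
proof -
  let ?k = "l * CARD('p) - 1"
  have "(\<Sum>i\<in>{1..n}. of_nat (M i) * Ivec n M l x i) =
      (\<Sum>i\<in>{1..n}. of_nat (M i) * coeff (common_factor * cofactor i) ?k)"
    by (intro sum.cong) (simp_all add: Ivec_eq_coeff)
  also have "\<dots> = coeff (pderiv (Phi n M x)) ?k"
    unfolding pderiv_Phi sum_distrib_left mult_smult_right coeff_sum coeff_smult ..
  also have "\<dots> = of_nat (l * CARD('p)) * coeff (Phi n M x) (l * CARD('p))"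
    using assms by (simp add: coeff_pderiv)
  also have "\<dots> = 0" by (simp add: of_nat_eq_0_iff_char_dvd)
  finally show ?thesis .
qed

lemma poly_cofactor_eq_0_iff:
  assumes "i \<in> {1..n}" and "j \<in> {1..n}"
  shows "poly (cofactor i) (x j) = 0 \<longleftrightarrow> j \<noteq> i"
proof -
  have "x j = x k \<longleftrightarrow> j = k" if "k \<in> {1..n}" for k
    using inj_onD[OF inj_x _ assms(2) that] by blast
  then show ?thesis
    using assms unfolding cofactor_def poly_prod by auto
qed

lemma poly_sum_smult_cofactor:
  assumes "i \<in> {1..n}"
  shows "poly (\<Sum>j\<in>{1..n}. smult (a j) (cofactor j)) (x i) = a i * poly (cofactor i) (x i)"
proof -
  have "poly (\<Sum>j\<in>{1..n}. smult (a j) (cofactor j)) (x i) =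
      (\<Sum>j\<in>{1..n}. if j = i then a i * poly (cofactor i) (x i) else 0)"
    unfolding poly_sum using assms poly_cofactor_eq_0_iff by (intro sum.cong) auto
  also have "\<dots> = a i * poly (cofactor i) (x i)" using assms by simp
  finally show ?thesis .
qed

lemma degree_cofactor:
  assumes "i \<in> {1..n}"
  shows "degree (cofactor i) \<le> n - 1"
proof -
  have "degree (cofactor i) \<le> (\<Sum>j\<in>{1..n}-{i}. degree [:-x j, 1:])"
    unfolding cofactor_def by (rule degree_prod_sum_le[unfolded o_def]) simp
  also have "\<dots> = n - 1" using assms by simp
  finally show ?thesis .
qed

lemma interpolation_exists:
  "\<exists>K. degree K \<le> n - 1 \<and> (\<forall>i\<in>{1..n}. poly K (x i) = v i)"
proof (intro exI conjI ballI)
  let ?K = "\<Sum>j\<in>{1..n}. smult (v j / poly (cofactor j) (x j)) (cofactor j)"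
  show "degree ?K \<le> n - 1"
    by (intro degree_sum_le order.trans[OF degree_smult_le] degree_cofactor) auto
  fix i assume i: "i \<in> {1..n}"
  show "poly ?K (x i) = v i"
    using poly_sum_smult_cofactor[OF i, of "\<lambda>j. v j / poly (cofactor j) (x j)"]
      poly_cofactor_eq_0_iff[OF i i] by simp
qed

lemma degree_Phi: "degree (Phi n M x) = D"
  unfolding Phi_def by (subst degree_prod_sum_eq) (auto simp: degree_linear_power)

lemma degree_common_factor: "degree common_factor + n = D"
proof -
  have "degree common_factor = (\<Sum>i\<in>{1..n}. M i - 1)"
    unfolding common_factor_def by (subst degree_prod_sum_eq) (auto simp: degree_linear_power)
  moreover have "(\<Sum>i\<in>{1..n}. M i - 1) + (\<Sum>i\<in>{1..n}. 1) = D"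
    unfolding sum.distrib[symmetric] using M_pos by (intro sum.cong) auto
  ultimately show ?thesis by simp
qed

lemma D_bounds: "(n - 1) * CARD('p) \<le> D" "D < n * CARD('p)"
proof -
  have "D = (n - 1) * CARD('p) + D mod CARD('p)"
    using ample by (metis div_mult_mod_eq)
  moreover have "D mod CARD('p) < CARD('p)" by simp
  moreover have "n * CARD('p) = (n - 1) * CARD('p) + CARD('p)"
    using n_pos by (cases n) auto
  ultimately show "(n - 1) * CARD('p) \<le> D" "D < n * CARD('p)" by linarith+
qed

lemma Phi_dvd_if_vanishing:
  assumes roots: "\<forall>i\<in>{1..n}. poly F (x i) = 0" and "common_factor dvd pderiv F"
  shows "Phi n M x dvd F"
  unfolding Phi_def
proof (rule prod_dvd_if_pairwise_coprime)
  fix j assume j: "j \<in> {1..n}"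
  have "[:-x j, 1:] ^ (M j - 1) dvd common_factor"
    unfolding common_factor_def using j by (intro dvd_prodI) auto
  then have "[:-x j, 1:] ^ (M j - 1) dvd pderiv F" using assms(2) by (rule dvd_trans)
  moreover have "of_nat k \<noteq> (0 :: 'p mod_ring)" if "0 < k" "k \<le> M j - 1" for k
    using that M_less_card[OF j] by (intro of_nat_mod_ring_neq_0) auto
  ultimately have "[:-x j, 1:] ^ Suc (M j - 1) dvd F"
    using roots j by (intro linear_power_Suc_dvd_if_dvd_pderiv) auto
  then show "[:-x j, 1:] ^ M j dvd F" using M_pos[OF j] by simp
next
  fix i j assume "i \<in> {1..n}" "j \<in> {1..n}" "i \<noteq> j"
  then have "x i \<noteq> x j" using inj_onD[OF inj_x] by blast
  then show "coprime ([:-x i, 1:] ^ M i) ([:-x j, 1:] ^ M j)"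
    by (simp add: coprime_linear_poly)
qed simp

lemma antiderivative_vanishing_on_nodes:
  assumes deg: "degree G < D"
    and coeffs: "\<forall>l\<in>{1..n-1}. coeff G (l * CARD('p) - 1) = 0"
  shows "\<exists>F. pderiv F = G \<and> degree F \<le> D \<and> (\<forall>i\<in>{1..n}. poly F (x i) = 0)"
proof -
  have "coeff G k = 0" if "of_nat (Suc k) = (0 :: 'p mod_ring)" for k
  proof -
    have "CARD('p) dvd Suc k" using that by (simp add: of_nat_eq_0_iff_char_dvd del: of_nat_Suc)
    then obtain l where l: "Suc k = l * CARD('p)" by (metis dvdE mult.commute)
    then have "0 < l" by (cases l) auto
    show ?thesis
    proof (cases "l \<le> n - 1")
      case True
      then have "l \<in> {1..n-1}" using \<open>0 < l\<close> by simp
      moreover have "k = l * CARD('p) - 1" using l by simp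
      ultimately show ?thesis using coeffs by simp
    next
      case False
      then have "n * CARD('p) \<le> l * CARD('p)" by simp
      then have "degree G < k" using deg D_bounds(2) l by linarith
      then show ?thesis by (simp add: coeff_eq_0)
    qed
  qed
  then obtain F0 where F0: "pderiv F0 = G" "degree F0 \<le> Suc (degree G)"
    using exists_antiderivative by blast
  obtain K where K: "degree K \<le> n - 1" "\<forall>i\<in>{1..n}. poly K (x i) = poly F0 (x i)"
    using interpolation_exists[of "\<lambda>i. poly F0 (x i)"] by blast
  \<comment> \<open>Subtracting the p-th power K^p changes neither the derivative nor, by ampleness, the degree bound.\<close>
  define F where "F = F0 - K ^ CARD('p)"
  have "pderiv F = G"
    unfolding F_def pderiv_diff F0(1) by (simp add: pderiv_power of_nat_eq_0_iff_char_dvd)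
  moreover have "degree F \<le> D"
    unfolding F_def
  proof (rule degree_diff_le)
    show "degree F0 \<le> D" using F0(2) deg by linarith
    have "degree (K ^ CARD('p)) \<le> (n - 1) * CARD('p)"
      using degree_power_le[of K "CARD('p)"] K(1) by (meson le_trans mult_le_mono1)
    then show "degree (K ^ CARD('p)) \<le> D" using D_bounds(1) by linarith
  qed
  moreover have "\<forall>i\<in>{1..n}. poly F (x i) = 0"
    using K(2) finite_field_power_card_eq_same[where 'a = "'p mod_ring"] by (simp add: F_def)
  ultimately show ?thesis by blast
qed

lemma Ivec_left_kernel:
  assumes "\<forall>l\<in>{1..n-1}. (\<Sum>i\<in>{1..n}. d i * Ivec n M l x i) = 0"
  shows "\<exists>c. \<forall>i\<in>{1..n}. d i = c * of_nat (M i)"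
proof -
  define h where "h = (\<Sum>i\<in>{1..n}. smult (d i) (cofactor i))"
  have coeff_G: "coeff (common_factor * h) (l * CARD('p) - 1) = (\<Sum>i\<in>{1..n}. d i * Ivec n M l x i)" for l
    unfolding h_def sum_distrib_left mult_smult_right coeff_sum coeff_smult
    by (intro sum.cong) (simp_all add: Ivec_eq_coeff)
  have "degree h \<le> n - 1"
    unfolding h_def by (intro degree_sum_le order.trans[OF degree_smult_le] degree_cofactor) auto
  then have "degree (common_factor * h) < D"
    using degree_mult_le[of common_factor h] degree_common_factor n_pos by linarith
  then obtain F where F: "pderiv F = common_factor * h" "degree F \<le> D" "\<forall>i\<in>{1..n}. poly F (x i) = 0"
    using antiderivative_vanishing_on_nodes assms coeff_G by metis
  then have "Phi n M x dvd F" by (intro Phi_dvd_if_vanishing) simp_all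
  moreover have "Phi n M x \<noteq> 0" unfolding Phi_def by simp
  ultimately obtain c where c: "F = smult c (Phi n M x)"
    using dvd_degree_le_imp_smult F(2) degree_Phi by metis
  have "smult c (\<Sum>i\<in>{1..n}. smult (of_nat (M i)) (cofactor i)) =
      (\<Sum>i\<in>{1..n}. smult (c * of_nat (M i)) (cofactor i))"
    by (rule poly_eqI) (simp add: coeff_sum sum_distrib_left mult.assoc)
  then have "common_factor * h = common_factor * (\<Sum>i\<in>{1..n}. smult (c * of_nat (M i)) (cofactor i))"
    unfolding F(1)[symmetric] c pderiv_smult pderiv_Phi mult_smult_right[symmetric] by (rule arg_cong)
  moreover have "common_factor \<noteq> 0" unfolding common_factor_def by simp
  ultimately have h: "h = (\<Sum>i\<in>{1..n}. smult (c * of_nat (M i)) (cofactor i))" by simp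
  have "d i = c * of_nat (M i)" if i: "i \<in> {1..n}" for i
  proof -
    have "d i * poly (cofactor i) (x i) = c * of_nat (M i) * poly (cofactor i) (x i)"
      using arg_cong[OF h, of "\<lambda>f. poly f (x i)"] unfolding h_def poly_sum_smult_cofactor[OF i] .
    then show ?thesis using poly_cofactor_eq_0_iff[OF i i] by simp
  qed
  then show ?thesis by blast
qed

lemma Ivec_rows_independent:
  assumes "\<forall>l\<in>{1..n-1}. (\<Sum>i\<in>{1..n-1}. d i * Ivec n M l x i) = 0"
  shows "\<forall>i\<in>{1..n-1}. d i = 0"
proof -
  define d' where "d' i = (if i = n then 0 else d i)" for i
  have split_last: "{1..n} = insert n {1..n-1}" "n \<notin> {1..n-1}" using n_pos by auto
  have "(\<Sum>i\<in>{1..n}. d' i * Ivec n M l x i) = (\<Sum>i\<in>{1..n-1}. d i * Ivec n M l x i)" for l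
    unfolding split_last(1) using split_last(2) by (auto simp: d'_def intro!: sum.cong)
  then obtain c where c: "\<forall>i\<in>{1..n}. d' i = c * of_nat (M i)"
    using Ivec_left_kernel[of d'] assms by auto
  have "of_nat (M n) \<noteq> (0 :: 'p mod_ring)"
    using M_pos M_less_card n_pos by (intro of_nat_mod_ring_neq_0) auto
  moreover have "d' n = c * of_nat (M n)" using c n_pos by simp
  then have "c * of_nat (M n) = 0" by (simp add: d'_def)
  ultimately have "c = 0" by simp
  show ?thesis
  proof
    fix i assume "i \<in> {1..n-1}"
    then have "i \<in> {1..n}" and "i \<noteq> n" by auto
    then have "d' i = 0" using c \<open>c = 0\<close> by simp
    then show "d i = 0" using \<open>i \<noteq> n\<close> by (simp add: d'_def)
  qed
qed

end

theorem corollary7p7: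
  fixes q n :: nat and m :: "nat \<Rightarrow> nat"
  defines "p \<equiv> CARD('p::prime_card)"
  defines "M \<equiv> (\<lambda>i. bigM TYPE('p) q (m i))"
  assumes "prime q" and "2 \<le> n" and "n < p" and "q < p"
    and "\<And>i. i \<in> {1..n} \<Longrightarrow> 0 < m i \<and> m i < q"
    and ample: "(\<Sum>i\<in>{1..n}. M i) div p = n - 1"
  shows "\<forall>(x :: nat \<Rightarrow> 'p mod_ring) (w :: nat \<Rightarrow> 'p mod_ring).
           inj_on x {1..n} \<longrightarrow> (\<Sum>i\<in>{1..n}. of_nat (m i) * w i) = 0 \<longrightarrow>
           (\<exists>!c. c \<in> extensional {1..n-1} \<and>
              (\<forall>i\<in>{1..n}. w i = (\<Sum>l\<in>{1..n-1}. c l * Ivec n M l x i)))"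
proof (intro allI impI)
  fix x w :: "nat \<Rightarrow> 'p mod_ring"
  assume inj: "inj_on x {1..n}" and w: "(\<Sum>i\<in>{1..n}. of_nat (m i) * w i) = 0"
  have M_spec: "0 < M i" "M i < p" "(of_nat (M i) :: 'p mod_ring) = - of_nat (m i) * inverse (of_nat q)"
    if "i \<in> {1..n}" for i
    using bigM_spec[of "m i" q] assms(7)[OF that] \<open>q < p\<close> unfolding M_def p_def by auto
  interpret ample_nodes n M x
    using \<open>2 \<le> n\<close> inj M_spec(1,2) ample unfolding p_def by unfold_locales auto
  have "(\<Sum>i\<in>{1..n}. of_nat (M i) * w i) = (\<Sum>i\<in>{1..n}. - inverse (of_nat q) * (of_nat (m i) * w i))"
    by (intro sum.cong) (simp_all add: M_spec(3))
  also have "\<dots> = - inverse (of_nat q) * (\<Sum>i\<in>{1..n}. of_nat (m i) * w i)"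
    by (rule sum_distrib_left[symmetric])
  finally have Mw: "(\<Sum>i\<in>{1..n}. of_nat (M i) * w i) = 0" using w by simp
  show "\<exists>!c. c \<in> extensional {1..n-1} \<and> (\<forall>i\<in>{1..n}. w i = (\<Sum>l\<in>{1..n-1}. c l * Ivec n M l x i))"
  proof (rule unique_coordinates_in_hyperplane[where \<mu> = "\<lambda>i. of_nat (M i)"])
    show "of_nat (M n) \<noteq> (0 :: 'p mod_ring)"
      using M_spec n_pos unfolding p_def by (intro of_nat_mod_ring_neq_0) auto
    show "(\<Sum>i\<in>{1..n}. of_nat (M i) * Ivec n M l x i) = 0" if "l \<in> {1..n-1}" for l
      using that by (intro sum_M_Ivec_eq_0) simp
  qed (use n_pos Mw Ivec_rows_independent in auto)
qed

end
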